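(* Let $A$ (in $\mathcal H$) and $B$ (in $\mathcal K$) be closed densely defined operators with $A\dashv B$ via a bounded intertwining operator $T$, and assume that $T^{-1}$ is everywhere defined and bounded. Then $\rho(A)\setminus\sigma_p(B)\subseteq\rho(B)$ and $\rho(B)\setminus\sigma_r(A)\subseteq\rho(A)$.
   Context: A bounded operator $T:\mathcal H\to\mathcal K$ is a bounded intertwining operator for $A$ and $B$ if $T D(A)\subseteq D(B)$ and $BT\xi=TA\xi$ for all $\xi\in D(A)$. $A\dashv B$ (quasi-similarity) means there is a bounded intertwining operator $T$ for $A$ and $B$ that is injective with densely defined inverse $T^{-1}$. Spectral notions: $\rho(A)$ = set of $\lambda$ with $A-\lambda I$ injective and $(A-\lambda I)^{-1}$ bounded everywhere defined; $\sigma_p$ = set of eigenvalues; $\sigma_r(A)$ = set of $\lambda$ with $A-\lambda I$ injective and non-dense range. *)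

theory Defs
  imports "HOL-Analysis.Analysis"
begin

class complex_vector = real_vector +
  fixes scaleC :: "complex \<Rightarrow> 'a \<Rightarrow> 'a"  (infixr \<open>*\<^sub>C\<close> 75)
  assumes scaleC_add_right: "a *\<^sub>C (x + y) = a *\<^sub>C x + a *\<^sub>C y"
    and scaleC_add_left: "(a + b) *\<^sub>C x = a *\<^sub>C x + b *\<^sub>C x"
    and scaleC_scaleC: "a *\<^sub>C (b *\<^sub>C x) = (a * b) *\<^sub>C x"
    and scaleC_one: "1 *\<^sub>C x = x"
    and scaleR_scaleC: "scaleR r x = (complex_of_real r) *\<^sub>C x"

class complex_normed_vector = complex_vector + real_normed_vector +
  assumes norm_scaleC: "norm (a *\<^sub>C x) = cmod a * norm x"

class complex_inner = complex_normed_vector +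
  fixes cinner :: "'a \<Rightarrow> 'a \<Rightarrow> complex"
  assumes cinner_commute: "cinner x y = cnj (cinner y x)"
    and cinner_add_left: "cinner (x + y) z = cinner x z + cinner y z"
    and cinner_scaleC_left: "cinner (r *\<^sub>C x) y = cnj r * cinner x y"
    and norm_eq_sqrt_cinner: "norm x = sqrt (Re (cinner x x))"

class chilbert_space = complex_inner + complete_space

text \<open>An operator from H to K is a pair (D, A) with D a subset of H (its domain)
  and A a map that is complex linear on the linear subspace D.\<close>

definition csubspace :: "'a::complex_vector set \<Rightarrow> bool" where
  "csubspace D \<longleftrightarrow> 0 \<in> D \<and> (\<forall>x\<in>D. \<forall>y\<in>D. x + y \<in> D) \<and> (\<forall>c. \<forall>x\<in>D. c *\<^sub>C x \<in> D)"

definition linear_operator :: "'a::complex_vector set \<Rightarrow> ('a \<Rightarrow> 'b::complex_vector) \<Rightarrow> bool" where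
  "linear_operator D A \<longleftrightarrow> csubspace D \<and>
     (\<forall>x\<in>D. \<forall>y\<in>D. A (x + y) = A x + A y) \<and> (\<forall>c. \<forall>x\<in>D. A (c *\<^sub>C x) = c *\<^sub>C A x)"

definition densely_defined :: "'a::complex_normed_vector set \<Rightarrow> bool" where
  "densely_defined D \<longleftrightarrow> closure D = UNIV"

definition closed_operator :: "'a::complex_normed_vector set \<Rightarrow> ('a \<Rightarrow> 'b::complex_normed_vector) \<Rightarrow> bool" where
  "closed_operator D A \<longleftrightarrow> linear_operator D A \<and> closed ((\<lambda>x. (x, A x)) ` D)"

definition bounded_clinear :: "('a::complex_normed_vector \<Rightarrow> 'b::complex_normed_vector) \<Rightarrow> bool" where
  "bounded_clinear T \<longleftrightarrow> linear_operator UNIV T \<and> (\<exists>K. \<forall>x. norm (T x) \<le> norm x * K)"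

definition bounded_intertwining ::
  "('a::complex_normed_vector \<Rightarrow> 'b::complex_normed_vector) \<Rightarrow> 'a set \<Rightarrow> ('a \<Rightarrow> 'a) \<Rightarrow> 'b set \<Rightarrow> ('b \<Rightarrow> 'b) \<Rightarrow> bool" where
  "bounded_intertwining T DA A DB B \<longleftrightarrow>
     bounded_clinear T \<and> T ` DA \<subseteq> DB \<and> (\<forall>x\<in>DA. B (T x) = T (A x))"

text \<open>Quasi-similarity via a given T: T is an injective bounded intertwining operator
  whose inverse (defined on the range of T) is densely defined.\<close>
definition quasi_similar_via ::
  "('a::complex_normed_vector \<Rightarrow> 'b::complex_normed_vector) \<Rightarrow> 'a set \<Rightarrow> ('a \<Rightarrow> 'a) \<Rightarrow> 'b set \<Rightarrow> ('b \<Rightarrow> 'b) \<Rightarrow> bool" where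
  "quasi_similar_via T DA A DB B \<longleftrightarrow>
     bounded_intertwining T DA A DB B \<and> inj T \<and> densely_defined (range T)"

abbreviation shifted :: "('a \<Rightarrow> 'a) \<Rightarrow> complex \<Rightarrow> 'a \<Rightarrow> 'a::complex_vector" where
  "shifted A l \<equiv> (\<lambda>x. A x - l *\<^sub>C x)"

definition resolvent_set :: "'a set \<Rightarrow> ('a \<Rightarrow> 'a::complex_normed_vector) \<Rightarrow> complex set" where
  "resolvent_set D A = {l. inj_on (shifted A l) D \<and> shifted A l ` D = UNIV \<and>
      bounded_clinear (the_inv_into D (shifted A l))}"

definition point_spectrum :: "'a set \<Rightarrow> ('a \<Rightarrow> 'a::complex_normed_vector) \<Rightarrow> complex set" where
  "point_spectrum D A = {l. \<exists>x\<in>D. x \<noteq> 0 \<and> A x = l *\<^sub>C x}"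

definition residual_spectrum :: "'a set \<Rightarrow> ('a \<Rightarrow> 'a::complex_normed_vector) \<Rightarrow> complex set" where
  "residual_spectrum D A = {l. inj_on (shifted A l) D \<and> closure (shifted A l ` D) \<noteq> UNIV}"

end

theory Submission
  imports Defs
begin

(* Spectral comparison for quasi-similar operators whose intertwiner T is boundedly
   invertible.  Write A_l = A - l and B_l = B - l; intertwining gives B_l T = T A_l on DA.

   (1) If l is in rho(A) and not an eigenvalue of B, then B_l is injective, and
       T (A_l)^-1 T^-1 is a bounded right inverse of B_l with values in DB; hence it is
       the inverse of B_l and l is in rho(B).
   (2) If l is in rho(B), injectivity of T and B_l gives injectivity of A_l, and
       S = T^-1 (B_l)^-1 T is a bounded left inverse of A_l on DA.  A closed operator with
       a bounded left inverse has closed range; as l is not in the residual spectrum of A,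
       the range is also dense, so A_l is onto, S is its inverse and l is in rho(A). *)

lemma scaleC_minus1: "(-1::complex) *\<^sub>C (x::'a::complex_vector) = - x"
  by (metis scaleR_scaleC scaleR_minus1_left of_real_minus of_real_1)

lemma scaleC_diff_right: "(a::complex) *\<^sub>C ((x::'a::complex_vector) - y) = a *\<^sub>C x - a *\<^sub>C y"
  by (metis scaleC_add_right diff_add_cancel add_diff_cancel)

lemma linear_operator_diff:
  assumes "linear_operator D A" "x \<in> D" "y \<in> D"
  shows "x - y \<in> D" "A (x - y) = A x - A y"
proof -
  have my: "(-1::complex) *\<^sub>C y \<in> D"
    using assms(1,3) unfolding linear_operator_def csubspace_def by auto
  have split: "x - y = x + (-1::complex) *\<^sub>C y" by (simp add: scaleC_minus1)
  show "x - y \<in> D"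
    using assms(1,2) my unfolding split linear_operator_def csubspace_def by auto
  have "A (x + (-1::complex) *\<^sub>C y) = A x + (-1::complex) *\<^sub>C A y"
    using assms my unfolding linear_operator_def by auto
  then show "A (x - y) = A x - A y" unfolding split by (simp add: scaleC_minus1)
qed

lemma bounded_clinear_imp_bounded_linear:
  assumes "bounded_clinear f" shows "bounded_linear f"
proof -
  obtain K where K: "\<forall>x. norm (f x) \<le> norm x * K"
    using assms unfolding bounded_clinear_def by auto
  have l: "linear_operator UNIV f" using assms unfolding bounded_clinear_def by auto
  show ?thesis
    by (rule bounded_linear_intro[where K=K])
       (use l K in \<open>auto simp: linear_operator_def scaleR_scaleC\<close>)
qed

lemma bounded_clinear_compose:
  assumes "bounded_clinear f" "bounded_clinear g"
  shows "bounded_clinear (\<lambda>x. f (g x))"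
proof -
  obtain Kf where Kf: "\<And>x. norm (f x) \<le> norm x * Kf" "Kf > 0"
    using bounded_linear.pos_bounded[OF bounded_clinear_imp_bounded_linear[OF assms(1)]] by blast
  obtain Kg where Kg: "\<And>x. norm (g x) \<le> norm x * Kg" "Kg > 0"
    using bounded_linear.pos_bounded[OF bounded_clinear_imp_bounded_linear[OF assms(2)]] by blast
  have "norm (f (g x)) \<le> norm x * (Kg * Kf)" for x
  proof -
    have "norm (f (g x)) \<le> norm (g x) * Kf" by (rule Kf(1))
    also have "\<dots> \<le> norm x * Kg * Kf" using Kg Kf(2) by (simp add: mult_right_mono)
    finally show ?thesis by (simp add: mult.assoc)
  qed
  moreover have "linear_operator UNIV (\<lambda>x. f (g x))"
    using assms unfolding bounded_clinear_def linear_operator_def by auto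
  ultimately show ?thesis unfolding bounded_clinear_def by blast
qed

lemma bounded_linear_scaleC: "bounded_linear (\<lambda>x::'a::complex_normed_vector. l *\<^sub>C x)"
  by (rule bounded_linear_intro[where K="cmod l"])
     (auto simp: scaleC_add_right scaleR_scaleC scaleC_scaleC mult.commute norm_scaleC)

lemma intertwining_shifted:
  assumes "bounded_intertwining T DA A DB B" "x \<in> DA"
  shows "shifted B l (T x) = T (shifted A l x)"
proof -
  have lT: "linear_operator UNIV T"
    using assms(1) unfolding bounded_intertwining_def bounded_clinear_def by auto
  have "T (A x - l *\<^sub>C x) = T (A x) - l *\<^sub>C T x"
    using linear_operator_diff(2)[OF lT] lT unfolding linear_operator_def by simp
  then show ?thesis using assms unfolding bounded_intertwining_def by simp
qed

lemma inj_on_shifted_if_not_eigenvalue: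
  assumes "linear_operator D A" "l \<notin> point_spectrum D A"
  shows "inj_on (shifted A l) D"
proof (rule inj_onI)
  fix x y assume x: "x \<in> D" and y: "y \<in> D" and eq: "shifted A l x = shifted A l y"
  have "A x - A y = l *\<^sub>C x - l *\<^sub>C y"
    using eq by (simp add: algebra_simps)
  then have "A (x - y) = l *\<^sub>C (x - y)"
    by (simp add: linear_operator_diff(2)[OF assms(1) x y] scaleC_diff_right)
  then have "x - y = 0"
    using assms(2) linear_operator_diff(1)[OF assms(1) x y] unfolding point_spectrum_def by auto
  then show "x = y" by simp
qed

lemma resolvent_setI:
  assumes inj: "inj_on (shifted A l) D" and bounded: "bounded_clinear S"
    and into: "\<And>y. S y \<in> D" and right_inverse: "\<And>y. shifted A l (S y) = y"
  shows "l \<in> resolvent_set D A"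
proof -
  have "y \<in> shifted A l ` D" for y
    by (rule image_eqI[where f="shifted A l", OF right_inverse[symmetric] into])
  then have "shifted A l ` D = UNIV" by blast
  moreover have "the_inv_into D (shifted A l) = S"
    by (rule ext, rule the_inv_into_f_eq[OF inj right_inverse into])
  ultimately show ?thesis using inj bounded unfolding resolvent_set_def by auto
qed

text \<open>A closed operator A - l admitting a bounded left inverse S on its domain has closed
  range: if (A - l) x_n converges to z, then x_n = S((A - l) x_n) converges to S z and
  A x_n to z + l S z, so by closedness of the graph S z is in D and (A - l)(S z) = z.\<close>
lemma closed_range_if_bounded_left_inverse:
  assumes closed: "closed_operator D A" and bounded: "bounded_linear S"
    and left_inverse: "\<And>x. x \<in> D \<Longrightarrow> S (shifted A l x) = x"
  shows "closed (shifted A l ` D)"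
  unfolding closed_sequential_limits
proof (intro allI impI, elim conjE)
  fix zs z assume range: "\<forall>n. zs n \<in> shifted A l ` D" and lim: "zs \<longlonglongrightarrow> z"
  have "\<forall>n. \<exists>x. x \<in> D \<and> zs n = shifted A l x" using range by (auto simp: image_iff)
  then obtain xs where xs: "\<And>n. xs n \<in> D" "\<And>n. zs n = shifted A l (xs n)"
    using choice[of "\<lambda>n x. x \<in> D \<and> zs n = shifted A l x"] by blast
  have xs_eq: "xs n = S (zs n)" for n using left_inverse[OF xs(1)] xs(2) by simp
  have lim_x: "xs \<longlonglongrightarrow> S z"
    unfolding xs_eq using bounded_linear.tendsto[OF bounded lim] .
  have "(\<lambda>n. zs n + l *\<^sub>C xs n) \<longlonglongrightarrow> z + l *\<^sub>C S z"
    using lim bounded_linear.tendsto[OF bounded_linear_scaleC lim_x] by (rule tendsto_add)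
  moreover have "zs n + l *\<^sub>C xs n = A (xs n)" for n using xs(2) by simp
  ultimately have lim_Ax: "(\<lambda>n. A (xs n)) \<longlonglongrightarrow> z + l *\<^sub>C S z" by simp
  have "closed ((\<lambda>x. (x, A x)) ` D)" using closed unfolding closed_operator_def by simp
  then have "(S z, z + l *\<^sub>C S z) \<in> (\<lambda>x. (x, A x)) ` D"
    using xs(1) tendsto_Pair[OF lim_x lim_Ax] by (rule closed_sequentially[OF _ imageI])
  then have in_D: "S z \<in> D" and graph: "A (S z) = z + l *\<^sub>C S z" by auto
  have "shifted A l (S z) = z" by (simp add: graph)
  then show "z \<in> shifted A l ` D" using in_D by (rule image_eqI[OF sym])
qed

lemma resolvent_transfer_forward:
  assumes lin_B: "linear_operator DB B" and intertw: "bounded_intertwining T DA A DB B"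
    and surj: "surj T" and bounded_inv: "bounded_clinear (inv T)"
    and rho_A: "l \<in> resolvent_set DA A" and not_eigen: "l \<notin> point_spectrum DB B"
  shows "l \<in> resolvent_set DB B"
proof -
  define R where "R = the_inv_into DA (shifted A l)"
  have inj_A: "inj_on (shifted A l) DA" and onto_A: "shifted A l ` DA = UNIV"
    and bounded_R: "bounded_clinear R"
    using rho_A unfolding resolvent_set_def R_def by auto
  have R_into: "R y \<in> DA" and R_right: "shifted A l (R y) = y" for y
    unfolding R_def using the_inv_into_into[OF inj_A] f_the_inv_into_f[OF inj_A] onto_A by auto
  have T_bounded: "bounded_clinear T" and T_maps: "T ` DA \<subseteq> DB"
    using intertw unfolding bounded_intertwining_def by auto
  show ?thesis
  proof (rule resolvent_setI[where S="\<lambda>y. T (R (inv T y))"])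
    show "inj_on (shifted B l) DB" by (rule inj_on_shifted_if_not_eigenvalue[OF lin_B not_eigen])
    show "bounded_clinear (\<lambda>y. T (R (inv T y)))"
      by (rule bounded_clinear_compose[OF T_bounded bounded_clinear_compose[OF bounded_R bounded_inv]])
    show "T (R (inv T y)) \<in> DB" for y using T_maps R_into by auto
    show "shifted B l (T (R (inv T y))) = y" for y
      using intertwining_shifted[OF intertw R_into] R_right surj by (simp add: surj_f_inv_f)
  qed
qed

lemma resolvent_transfer_backward:
  assumes closed_A: "closed_operator DA A" and intertw: "bounded_intertwining T DA A DB B"
    and inj: "inj T" and bounded_inv: "bounded_clinear (inv T)"
    and rho_B: "l \<in> resolvent_set DB B" and not_residual: "l \<notin> residual_spectrum DA A"
  shows "l \<in> resolvent_set DA A"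
proof -
  define R where "R = the_inv_into DB (shifted B l)"
  have inj_B: "inj_on (shifted B l) DB" and bounded_R: "bounded_clinear R"
    using rho_B unfolding resolvent_set_def R_def by auto
  have T_bounded: "bounded_clinear T" and T_maps: "T ` DA \<subseteq> DB"
    using intertw unfolding bounded_intertwining_def by auto
  define S where "S = (\<lambda>z. inv T (R (T z)))"
  have bounded_S: "bounded_clinear S"
    unfolding S_def
    by (rule bounded_clinear_compose[OF bounded_inv bounded_clinear_compose[OF bounded_R T_bounded]])
  have S_left: "S (shifted A l x) = x" if x: "x \<in> DA" for x
  proof -
    have "R (shifted B l (T x)) = T x"
      unfolding R_def using x T_maps by (intro the_inv_into_f_f[OF inj_B]) auto
    then have "R (T (shifted A l x)) = T x" by (simp only: intertwining_shifted[OF intertw x])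
    then show ?thesis unfolding S_def by (simp only: inv_f_f[OF inj])
  qed
  have inj_A: "inj_on (shifted A l) DA" using S_left by (rule inj_on_inverseI)
  have "closed (shifted A l ` DA)"
    using closed_range_if_bounded_left_inverse[OF closed_A
        bounded_clinear_imp_bounded_linear[OF bounded_S] S_left] .
  moreover have "closure (shifted A l ` DA) = UNIV"
    using not_residual inj_A unfolding residual_spectrum_def by auto
  ultimately have onto_A: "shifted A l ` DA = UNIV" by (simp only: closure_closed)
  have S_into: "S z \<in> DA" and S_right: "shifted A l (S z) = z" for z
  proof -
    have "z \<in> shifted A l ` DA" by (simp only: onto_A UNIV_I)
    then obtain x where "x \<in> DA" "z = shifted A l x" by (rule imageE)
    then show "S z \<in> DA" "shifted A l (S z) = z" using S_left by simp_all
  qed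
  show ?thesis by (rule resolvent_setI[OF inj_A bounded_S S_into S_right])
qed

theorem corollary3p12:
  fixes DA :: "'a::chilbert_space set" and A :: "'a \<Rightarrow> 'a"
    and DB :: "'b::chilbert_space set" and B :: "'b \<Rightarrow> 'b"
    and T :: "'a \<Rightarrow> 'b"
  assumes "closed_operator DA A" and "densely_defined DA"
    and "closed_operator DB B" and "densely_defined DB"
    and "quasi_similar_via T DA A DB B"
    and "surj T" and "bounded_clinear (inv T)"
  shows "resolvent_set DA A - point_spectrum DB B \<subseteq> resolvent_set DB B \<and>
         resolvent_set DB B - residual_spectrum DA A \<subseteq> resolvent_set DA A"
proof -
  have lin_B: "linear_operator DB B" using assms(3) unfolding closed_operator_def by auto
  have intertw: "bounded_intertwining T DA A DB B" and inj: "inj T"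
    using assms(5) unfolding quasi_similar_via_def by auto
  show ?thesis
    using resolvent_transfer_forward[OF lin_B intertw assms(6,7)]
      resolvent_transfer_backward[OF assms(1) intertw inj assms(7)] by blast
qed

end
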